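(* Let $\epsilon'>0$, $0<\mu'\le1$, $0<\Gamma_0\le1$, and let $\tau\subset\mathbb R^m$ be a $\Gamma_0$-flake with $L(\tau)\le3\epsilon'$ and $\ell(\tau)\ge\mu'\epsilon'$. Suppose there exist $p\in\tau$, a ball $B(C,R)$ circumscribing $\tau_p$ with $R<\frac32\epsilon'$, and $\tilde\delta_0\ge0$ with $d(p,\partial B(C,R))\le\tilde\delta_0\,\ell(\tau_p)$. Then $$d\big(p,S(\tau_p)\big)\le\Big(\frac{14}{\mu'}\tilde\delta_0+\frac{216}{\mu'^3}\Gamma_0\Big)R(\tau_p).$$
   Context: A simplex is a nonempty finite subset $\sigma\subset\mathbb R^m$ (vertices need not be affinely independent); $\dim\sigma=|\sigma|-1$; faces are nonempty subsets. For $p\in\sigma$, $\sigma_p=\sigma\setminus\{p\}$. $L(\sigma)$, $\ell(\sigma)$ are the largest and smallest distances between distinct vertices. Altitude $D(p,\sigma)=d(p,\mathrm{aff}(\sigma_p))$. Thickness of a $j$-simplex: $\Upsilon(\sigma)=1$ if $j=0$, else $\min_{p}D(p,\sigma)/(jL(\sigma))$. $\sigma$ is $\Gamma_0$-good if every $j$-face $\sigma^j$ satisfies $\Upsilon(\sigma^j)\ge\Gamma_0^j$; $\Gamma_0$-bad otherwise; a $\Gamma_0$-flake is a $\Gamma_0$-bad simplex whose proper faces are all $\Gamma_0$-good. A circumscribing ball of $\sigma$ is an open ball whose boundary contains all vertices of $\sigma$. If one exists, the circumcentre $c(\sigma)$ and circumradius $R(\sigma)$ are the centre and radius of the smallest one.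 The circumsphere is $S(\sigma)=\partial B(c(\sigma),R(\sigma))\cap\mathrm{aff}(\sigma)$. *)

theory Defs
  imports "HOL-Analysis.Analysis"
begin

text \<open>A simplex is a nonempty finite set of points (vertices need not be affinely independent).\<close>
definition is_simplex :: "'a::euclidean_space set \<Rightarrow> bool" where
  "is_simplex \<sigma> \<longleftrightarrow> finite \<sigma> \<and> \<sigma> \<noteq> {}"

definition sdim :: "'a::euclidean_space set \<Rightarrow> nat" where
  "sdim \<sigma> = card \<sigma> - 1"

definition Lmax :: "'a::euclidean_space set \<Rightarrow> real" where
  "Lmax \<sigma> = Max {dist x y | x y. x \<in> \<sigma> \<and> y \<in> \<sigma> \<and> x \<noteq> y}"

definition lmin :: "'a::euclidean_space set \<Rightarrow> real" where
  "lmin \<sigma> = Min {dist x y | x y. x \<in> \<sigma> \<and> y \<in> \<sigma> \<and> x \<noteq> y}"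

definition altitude :: "'a::euclidean_space \<Rightarrow> 'a set \<Rightarrow> real" where
  "altitude p \<sigma> = infdist p (affine hull (\<sigma> - {p}))"

definition thickness :: "'a::euclidean_space set \<Rightarrow> real" where
  "thickness \<sigma> = (if sdim \<sigma> = 0 then 1
     else Min ((\<lambda>p. altitude p \<sigma>) ` \<sigma>) / (real (sdim \<sigma>) * Lmax \<sigma>))"

definition good :: "real \<Rightarrow> 'a::euclidean_space set \<Rightarrow> bool" where
  "good \<Gamma>0 \<sigma> \<longleftrightarrow> (\<forall>\<tau>. \<tau> \<subseteq> \<sigma> \<and> \<tau> \<noteq> {} \<longrightarrow> thickness \<tau> \<ge> \<Gamma>0 ^ sdim \<tau>)"

definition flake :: "real \<Rightarrow> 'a::euclidean_space set \<Rightarrow> bool" where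
  "flake \<Gamma>0 \<sigma> \<longleftrightarrow> \<not> good \<Gamma>0 \<sigma> \<and> (\<forall>\<tau>. \<tau> \<subset> \<sigma> \<and> \<tau> \<noteq> {} \<longrightarrow> good \<Gamma>0 \<tau>)"

definition circumscribing :: "'a::euclidean_space \<Rightarrow> real \<Rightarrow> 'a set \<Rightarrow> bool" where
  "circumscribing c r \<sigma> \<longleftrightarrow> r > 0 \<and> \<sigma> \<subseteq> frontier (ball c r)"

definition smallest_circumscribing :: "'a::euclidean_space \<Rightarrow> real \<Rightarrow> 'a set \<Rightarrow> bool" where
  "smallest_circumscribing c r \<sigma> \<longleftrightarrow> circumscribing c r \<sigma> \<and>
     (\<forall>c' r'. circumscribing c' r' \<sigma> \<longrightarrow> r \<le> r')"

definition circumcentre :: "'a::euclidean_space set \<Rightarrow> 'a" where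
  "circumcentre \<sigma> = fst (SOME (c, r). smallest_circumscribing c r \<sigma>)"

definition circumradius :: "'a::euclidean_space set \<Rightarrow> real" where
  "circumradius \<sigma> = snd (SOME (c, r). smallest_circumscribing c r \<sigma>)"

definition circumsphere :: "'a::euclidean_space set \<Rightarrow> 'a set" where
  "circumsphere \<sigma> = frontier (ball (circumcentre \<sigma>) (circumradius \<sigma>)) \<inter> affine hull \<sigma>"

end

theory Submission
  imports Defs
begin

text \<open>
  The facet \<open>\<tau> - {p}\<close> of the flake is \<open>\<Gamma>0\<close>-good while \<open>\<tau>\<close> has a vertex q of tiny altitude.
  Computing the volume of \<open>\<tau>\<close> once over the facet opposite p and once over the facet
  opposite q shows that the altitude of p is \<open>O(\<Gamma>0 \<epsilon>'/\<mu>')\<close>, i.e. p is close to the affine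
  hull of \<open>\<tau> - {p}\<close>.

  The circumcentre c of \<open>\<tau> - {p}\<close> is the orthogonal projection onto its affine hull of the
  centre C of any circumscribing ball, so \<open>R\<^sup>2 = R(\<tau> - {p})\<^sup>2 + \<bar>C - c\<bar>\<^sup>2\<close>. Writing p = p' + z
  with p' in the affine hull and z normal to it, the distance from p to the circumsphere is
  at most \<open>sqrt (\<bar>z\<bar>\<^sup>2 + (\<bar>p' - c\<bar> - R(\<tau> - {p}))\<^sup>2)\<close>, and the identity
  \<open>(a - r)(a + r) = (b - R)(b + R)\<close> for \<open>a = \<bar>p' - c\<bar>\<close>, \<open>b = \<bar>p' - C\<bar>\<close> transfers the closeness
  of p to the sphere \<open>\<partial>B(C, R)\<close> to closeness of p' to the circumsphere.
\<close>

section \<open>Affine hulls and orthogonal decomposition\<close>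

lemma affine_hull_iff_span_diff:
  fixes a :: "'a::real_vector"
  assumes "a \<in> S"
  shows "x \<in> affine hull S \<longleftrightarrow> x - a \<in> span ((\<lambda>y. y - a) ` S)"
proof -
  have "(\<lambda>y. -a + y) ` S = (\<lambda>y. y - a) ` S" by auto
  then have "affine hull S = (\<lambda>v. a + v) ` span ((\<lambda>y. y - a) ` S)"
    using affine_hull_span_gen[OF hull_inc[OF assms]] by simp
  then show ?thesis by (auto intro: image_eqI[where x = "x - a"])
qed

lemma affine_hull_insert_iff_span_diff:
  fixes a :: "'a::real_vector"
  assumes "a \<in> S" "p - a - u \<in> span ((\<lambda>y. y - a) ` S)"
  shows "x \<in> affine hull (insert p S) \<longleftrightarrow> (\<exists>t. x - a - t *\<^sub>R u \<in> span ((\<lambda>y. y - a) ` S))"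
proof -
  have "x - a - t *\<^sub>R (p - a) \<in> span ((\<lambda>y. y - a) ` S)
      \<longleftrightarrow> x - a - t *\<^sub>R u \<in> span ((\<lambda>y. y - a) ` S)" for t
  proof -
    have "x - a - t *\<^sub>R u = (x - a - t *\<^sub>R (p - a)) + t *\<^sub>R (p - a - u)"
      by (simp add: algebra_simps)
    then show ?thesis
      using span_add[of _ _ "t *\<^sub>R (p - a - u)"] span_diff[of _ _ "t *\<^sub>R (p - a - u)"]
        span_mul[OF assms(2), of t]
      by (metis add_diff_cancel)
  qed
  then show ?thesis
    using affine_hull_iff_span_diff[of a "insert p S" x] assms(1) by (simp add: span_insert)
qed

lemma diff_in_span_affine_hull:
  fixes a :: "'a::real_vector"
  assumes "a \<in> S" "x \<in> affine hull S" "y \<in> affine hull S"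
  shows "x - y \<in> span ((\<lambda>z. z - a) ` S)"
  using span_diff[of "x - a" _ "y - a"] assms affine_hull_iff_span_diff by fastforce

lemma affine_hull_orthogonal_decomp:
  fixes a x :: "'a::euclidean_space"
  assumes "a \<in> S"
  obtains c z where "c \<in> affine hull S" "\<forall>v\<in>span ((\<lambda>y. y - a) ` S). orthogonal z v"
    "x = c + z"
proof -
  obtain w z where "w \<in> span ((\<lambda>y. y - a) ` S)"
      "\<And>v. v \<in> span ((\<lambda>y. y - a) ` S) \<Longrightarrow> orthogonal z v" "x - a = w + z"
    using orthogonal_subspace_decomp_exists[of "(\<lambda>y. y - a) ` S" "x - a"] by blast
  moreover from this have "a + w \<in> affine hull S"
    using affine_hull_iff_span_diff[OF assms] by simp
  ultimately show thesis
    using that[of "a + w" z] by (simp add: algebra_simps)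
qed

lemma norm_le_norm_add_orthogonal:
  fixes x y :: "'a::real_inner"
  assumes "orthogonal x y"
  shows "norm x \<le> norm (x + y)"
  using norm_add_Pythagorean[OF assms] by (simp add: power2_le_imp_le)

lemma dist_add_orthogonal_affine_hull:
  fixes a x c z :: "'a::euclidean_space"
  assumes "a \<in> S" "x \<in> affine hull S" "c \<in> affine hull S"
    "\<forall>v\<in>span ((\<lambda>y. y - a) ` S). orthogonal z v"
  shows "dist x (c + z)^2 = dist x c ^2 + norm z ^2"
proof -
  have "orthogonal (x - c) (- z)"
    using assms(4)[rule_format, OF diff_in_span_affine_hull[OF assms(1-3)]]
    by (simp add: orthogonal_commute orthogonal_clauses)
  then have "norm ((x - c) + (- z))^2 = norm (x - c)^2 + norm (- z)^2"
    by (rule norm_add_Pythagorean)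
  then show ?thesis by (simp add: dist_norm algebra_simps)
qed

lemma norm_le_infdist_affine_hull:
  fixes a x z :: "'a::euclidean_space"
  assumes "a \<in> S" "x \<in> affine hull S" "\<forall>v\<in>span ((\<lambda>y. y - a) ` S). orthogonal z v"
  shows "norm z \<le> infdist (x + z) (affine hull S)"
proof -
  obtain y where y: "y \<in> affine hull S" and "infdist (x + z) (affine hull S) = dist (x + z) y"
    using infdist_attains_inf[of "affine hull S"] assms(1) by auto
  moreover have "dist y (x + z)^2 = dist y x ^2 + norm z ^2"
    by (rule dist_add_orthogonal_affine_hull[OF assms(1) y assms(2,3)])
  ultimately show ?thesis
    by (simp add: dist_commute power2_le_imp_le)
qed

section \<open>Exchanging altitudes\<close>

lemma norm_diff_scaleR_power2:
  fixes u v :: "'a::real_inner"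
  shows "norm (u - t *\<^sub>R v)^2 = norm u ^2 - 2 * t * inner u v + t^2 * norm v ^2"
  unfolding power2_norm_eq_inner
  by (simp add: inner_commute power2_eq_square algebra_simps)

lemma gram_le_norm_diff_scaleR_mult:
  fixes u v :: "'a::real_inner"
  shows "(norm u * norm v)^2 - (inner u v)^2 \<le> (norm (v - t *\<^sub>R u) * norm u)^2"
proof -
  have "(norm (v - t *\<^sub>R u) * norm u)^2
      = (norm u * norm v)^2 - (inner u v)^2 + (inner u v - t * norm u ^2)^2"
    unfolding power_mult_distrib norm_diff_scaleR_power2
    by (simp add: inner_commute power2_eq_square algebra_simps)
  then show ?thesis by simp
qed

lemma gram_eq_norm_diff_scaleR_mult:
  fixes u v :: "'a::real_inner"
  obtains t where "(norm (u - t *\<^sub>R v) * norm v)^2 = (norm u * norm v)^2 - (inner u v)^2"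
proof (cases "v = 0")
  case False
  define t where "t = inner u v / norm v ^2"
  have "(norm (u - t *\<^sub>R v) * norm v)^2 = (norm u * norm v)^2 - (inner u v)^2"
    unfolding power_mult_distrib norm_diff_scaleR_power2 t_def
    using False by (simp add: field_simps power2_eq_square)
  then show thesis by (rule that)
qed (use that in simp)

text \<open>With u, v the components of \<open>p - a\<close>, \<open>q - a\<close> normal to the affine hull of T, both
  sides are compared with the area of the parallelogram spanned by u and v.\<close>
lemma infdist_affine_hull_insert_exchange:
  fixes p q a :: "'a::euclidean_space"
  assumes "a \<in> T"
  shows "infdist p (affine hull (insert q T)) * infdist q (affine hull T)
     \<le> infdist q (affine hull (insert p T)) * dist p a"
proof -
  define W where "W = span ((\<lambda>y. y - a) ` T)"
  obtain pW u where pW: "pW \<in> W" and u: "\<And>w. w \<in> W \<Longrightarrow> orthogonal u w" and pu: "p - a = pW + u"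
    using orthogonal_subspace_decomp_exists unfolding W_def by blast
  obtain qW v where qW: "qW \<in> W" and v: "\<And>w. w \<in> W \<Longrightarrow> orthogonal v w" and qv: "q - a = qW + v"
    using orthogonal_subspace_decomp_exists unfolding W_def by blast
  have p_hull: "y \<in> affine hull (insert p T) \<longleftrightarrow> (\<exists>s. y - a - s *\<^sub>R u \<in> W)" for y
    using affine_hull_insert_iff_span_diff[OF assms, of p u] pW pu unfolding W_def by simp
  have q_hull: "y \<in> affine hull (insert q T) \<longleftrightarrow> (\<exists>s. y - a - s *\<^sub>R v \<in> W)" for y
    using affine_hull_insert_iff_span_diff[OF assms, of q v] qW qv unfolding W_def by simp
  have "a + qW \<in> affine hull T"
    using affine_hull_iff_span_diff[OF assms] qW unfolding W_def by simp
  then have Iv: "infdist q (affine hull T) \<le> norm v"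
    using infdist_le[of "a + qW" _ q] qv by (simp add: dist_norm algebra_simps)
  obtain t where t: "(norm (u - t *\<^sub>R v) * norm v)^2 = (norm u * norm v)^2 - (inner u v)^2"
    by (rule gram_eq_norm_diff_scaleR_mult)
  have "a + pW + t *\<^sub>R v \<in> affine hull (insert q T)"
    unfolding q_hull by (rule exI[of _ t]) (simp add: pW)
  then have Iu: "infdist p (affine hull (insert q T)) \<le> norm (u - t *\<^sub>R v)"
    using infdist_le[of "a + pW + t *\<^sub>R v" _ p] pu by (simp add: dist_norm algebra_simps)
  obtain x where x: "x \<in> affine hull (insert p T)" and Iq: "infdist q (affine hull (insert p T)) = dist q x"
    by (rule infdist_attains_inf[of "affine hull (insert p T)"]) auto
  then obtain s where s: "x - a - s *\<^sub>R u \<in> W"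
    using p_hull by blast
  have "q - x = (v - s *\<^sub>R u) + (qW - (x - a - s *\<^sub>R u))"
    using qv by (simp add: algebra_simps)
  moreover have "orthogonal (v - s *\<^sub>R u) (qW - (x - a - s *\<^sub>R u))"
    using orthogonal_clauses(10)[OF v orthogonal_clauses(7)[OF u]] span_diff[OF qW[unfolded W_def]]
      s unfolding W_def by blast
  ultimately have "norm (v - s *\<^sub>R u) \<le> dist q x"
    by (metis dist_norm norm_le_norm_add_orthogonal)
  have "norm u \<le> dist p a"
    using norm_le_norm_add_orthogonal[OF u[OF pW]] pu by (simp add: dist_norm add.commute)
  have "(infdist p (affine hull (insert q T)) * infdist q (affine hull T))^2
      \<le> (norm (u - t *\<^sub>R v) * norm v)^2"
    using Iu Iv by (intro power_mono mult_mono) (auto simp: infdist_nonneg)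
  also have "\<dots> \<le> (norm (v - s *\<^sub>R u) * norm u)^2"
    unfolding t by (rule gram_le_norm_diff_scaleR_mult)
  also have "\<dots> \<le> (infdist q (affine hull (insert p T)) * dist p a)^2"
    using \<open>norm (v - s *\<^sub>R u) \<le> dist q x\<close> \<open>norm u \<le> dist p a\<close> unfolding Iq
    by (intro power_mono mult_mono) auto
  finally show ?thesis
    by (rule power2_le_imp_le) (simp add: Iq)
qed

section \<open>Circumscribing balls\<close>

lemma circumscribing_iff: "circumscribing c r T \<longleftrightarrow> r > 0 \<and> (\<forall>y\<in>T. dist y c = r)"
  unfolding circumscribing_def by (auto simp: dist_commute)

lemma orthogonal_diff_equidistant_centres:
  fixes a c c' :: "'a::euclidean_space"
  assumes "a \<in> T" "\<And>y. y \<in> T \<Longrightarrow> dist y c = r" "\<And>y. y \<in> T \<Longrightarrow> dist y c' = r'"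
    "v \<in> span ((\<lambda>y. y - a) ` T)"
  shows "orthogonal (c' - c) v"
proof (rule orthogonal_to_span[OF assms(4)], clarify)
  fix y assume y: "y \<in> T"
  have "(norm (y - c))^2 = (norm (a - c))^2" "(norm (y - c'))^2 = (norm (a - c'))^2"
    using assms(2,3)[OF y] assms(2,3)[OF assms(1)] by (simp_all add: dist_norm)
  then show "orthogonal (c' - c) (y - a)"
    unfolding orthogonal_def power2_norm_eq_inner by (simp add: inner_commute algebra_simps)
qed

lemma dist_equidistant_centres_Pythagoras:
  fixes a c c' x :: "'a::euclidean_space"
  assumes "a \<in> T" "c \<in> affine hull T" "x \<in> affine hull T"
    "\<And>y. y \<in> T \<Longrightarrow> dist y c = r" "\<And>y. y \<in> T \<Longrightarrow> dist y c' = r'"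
  shows "dist x c' ^2 = dist x c ^2 + dist c' c ^2"
  using dist_add_orthogonal_affine_hull[OF assms(1,3,2), of "c' - c"]
    orthogonal_diff_equidistant_centres[OF assms(1,4,5)]
  by (simp add: dist_norm)

lemma circumscribing_affine_hull_centre:
  fixes C :: "'a::euclidean_space"
  assumes "a \<in> T" "b \<in> T" "a \<noteq> b" "circumscribing C R T"
  obtains c r where "circumscribing c r T" "c \<in> affine hull T"
proof -
  obtain c z where c: "c \<in> affine hull T" and z: "\<forall>v\<in>span ((\<lambda>y. y - a) ` T). orthogonal z v"
    and Cc: "C = c + z"
    using affine_hull_orthogonal_decomp[OF assms(1)] by blast
  have R: "R^2 = dist y c ^2 + norm z ^2" if "y \<in> T" for y
    using dist_add_orthogonal_affine_hull[OF assms(1) hull_inc[OF that] c z] assms(4) Cc that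
    by (simp add: circumscribing_iff)
  have "dist y c = dist a c" if "y \<in> T" for y
    using R[OF that] R[OF assms(1)] by simp
  moreover from this have "dist a c > 0"
    using assms(2,3) by force
  ultimately show thesis
    using that[of c "dist a c"] c by (simp add: circumscribing_iff)
qed

lemma circumcentre_circumradius:
  fixes C :: "'a::euclidean_space"
  assumes "a \<in> T" "b \<in> T" "a \<noteq> b" "circumscribing C R T"
  shows "circumscribing (circumcentre T) (circumradius T) T" "circumcentre T \<in> affine hull T"
    "circumradius T \<le> R"
proof -
  obtain c r where circ: "circumscribing c r T" and c: "c \<in> affine hull T"
    using circumscribing_affine_hull_centre[OF assms] by blast
  have pyth: "r'^2 = r^2 + dist c' c ^2" if "circumscribing c' r' T" for c' r'
    using dist_equidistant_centres_Pythagoras[OF assms(1) c hull_inc[OF assms(1)], of r c' r']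
      circ that assms(1) by (simp add: circumscribing_iff)
  have "r \<le> r'" if "circumscribing c' r' T" for c' r'
    using pyth[OF that] that by (auto simp: circumscribing_iff intro: power2_le_imp_le)
  then have sm: "smallest_circumscribing c r T"
    unfolding smallest_circumscribing_def using circ by blast
  obtain c0 r0 where cr0: "(SOME (c, r). smallest_circumscribing c r T) = (c0, r0)"
    by fastforce
  have "smallest_circumscribing c0 r0 T"
    using someI_ex[of "\<lambda>(c, r). smallest_circumscribing c r T"] sm cr0 by auto
  moreover have eqs: "circumcentre T = c0" "circumradius T = r0"
    unfolding circumcentre_def circumradius_def cr0 by simp_all
  ultimately have circ0: "circumscribing c0 r0 T"
    and min0: "\<And>c' r'. circumscribing c' r' T \<Longrightarrow> r0 \<le> r'"
    unfolding smallest_circumscribing_def by blast+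
  show "circumscribing (circumcentre T) (circumradius T) T" using circ0 eqs by simp
  show "circumradius T \<le> R" using min0[OF assms(4)] eqs by simp
  have "r0 = r"
    using min0[OF circ] sm circ0 unfolding smallest_circumscribing_def by force
  then have "dist c0 c = 0"
    using pyth[OF circ0] by simp
  then show "circumcentre T \<in> affine hull T" using c eqs by simp
qed

section \<open>Distance to the circumsphere\<close>

lemma sqrt_sum_squares_le_of_abs_le:
  fixes \<mu> D h X :: real
  assumes "0 < \<mu>" "\<mu> \<le> 1" "0 \<le> D" "0 \<le> h" "\<bar>X\<bar> \<le> (6/\<mu> - \<mu>/6) * (D + h)"
  shows "sqrt (h^2 + X^2) \<le> 6/\<mu> * (D + h)"
proof -
  have "X^2 \<le> ((6/\<mu> - \<mu>/6) * (D + h))^2"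
    using power_mono[OF assms(5) abs_ge_zero, of 2] by simp
  also have "\<dots> = ((6/\<mu>)^2 - 2 + (\<mu>/6)^2) * (D + h)^2"
    using assms(1) by (simp add: power2_eq_square field_simps)
  also have "\<dots> \<le> ((6/\<mu>)^2 - 1) * (D + h)^2"
    using assms(1,2) by (intro mult_right_mono) (simp_all add: power_le_one)
  finally have "h^2 + X^2 \<le> h^2 + ((6/\<mu>)^2 - 1) * (D + h)^2"
    by simp
  also have "\<dots> \<le> (6/\<mu>)^2 * (D + h)^2"
    using power_mono[of h "D + h" 2] assms(3,4) by (simp add: algebra_simps)
  also have "\<dots> = (6/\<mu> * (D + h))^2"
    by (rule power_mult_distrib[symmetric])
  finally show ?thesis
    using assms(1,3,4) by (intro real_le_lsqrt) simp_all
qed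

lemma leg_add_hypotenuse_le:
  fixes \<mu> s R r :: real
  assumes "0 < \<mu>" "\<mu> \<le> 1" "0 < r" "0 \<le> s" "0 \<le> R" "R^2 = r^2 + s^2" "R \<le> 3/\<mu> * r"
  shows "s + R \<le> (6/\<mu> - \<mu>/6) * r"
proof -
  have "r^2 \<le> R^2"
    using assms(6) by simp
  then have R0: "0 < R"
    using assms(3,5) power2_le_imp_le by fastforce
  define q where "q = r^2 / (2*R)"
  have q: "2 * R * q = r^2"
    unfolding q_def using R0 by simp
  then have "s^2 \<le> (R - q)^2"
    using assms(6) by (simp add: power2_diff algebra_simps)
  moreover have "q \<le> R / 2"
    using q \<open>r^2 \<le> R^2\<close> R0 mult_le_cancel_left_pos[of "2 * R" q "R / 2"]
    by (simp add: power2_eq_square)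
  ultimately have "s \<le> R - q"
    using R0 power2_le_imp_le[of s "R - q"] by linarith
  moreover have "\<mu> * r / 6 \<le> q"
  proof -
    have "\<mu> * R \<le> 3 * r"
      using assms(1,7) by (simp add: field_simps)
    then have "2 * R * (\<mu> * r / 6) \<le> 2 * R * q"
      unfolding q using assms(3) by (simp add: power2_eq_square algebra_simps mult_right_mono)
    then show ?thesis
      using R0 by simp
  qed
  moreover have "(6/\<mu> - \<mu>/6) * r = 2 * (3/\<mu> * r) - \<mu> * r / 6"
    by (simp add: algebra_simps)
  ultimately show ?thesis
    using assms(7) by linarith
qed

lemma abs_diff_mult_le_of_common_leg:
  fixes a b r s R :: real
  assumes "0 \<le> a" "0 \<le> b" "0 < r" "0 \<le> s" "0 \<le> R" "b^2 = a^2 + s^2" "R^2 = r^2 + s^2" "b \<le> a + s"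
  shows "\<bar>a - r\<bar> * r \<le> \<bar>b - R\<bar> * (s + R)"
proof -
  have "r \<le> R"
    using assms(5,7) power2_le_imp_le[of r R] by simp
  have "(a - r) * (a + r) = (b - R) * (b + R)"
    using assms(6,7) by (simp add: algebra_simps power2_eq_square)
  then have eq: "\<bar>a - r\<bar> * (a + r) = \<bar>b - R\<bar> * (b + R)"
    using assms(1-3,5) by (metis abs_mult abs_of_nonneg add_nonneg_nonneg less_imp_le)
  show ?thesis
  proof (cases "\<bar>a - r\<bar> \<le> \<bar>b - R\<bar>")
    case True
    then show ?thesis
      using \<open>r \<le> R\<close> assms(3,4) by (intro mult_mono) auto
  next
    case False
    then have "\<bar>b - R\<bar> * a \<le> \<bar>a - r\<bar> * a"
      using assms(1) by (intro mult_right_mono) auto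
    moreover have "\<bar>b - R\<bar> * (b + R) \<le> \<bar>b - R\<bar> * (a + s + R)"
      using assms(8) by (intro mult_left_mono) auto
    ultimately show ?thesis
      using eq by (simp add: algebra_simps)
  qed
qed

lemma abs_dist_diff_le_infdist_sphere:
  fixes x C :: "'a::euclidean_space"
  assumes "0 \<le> R"
  shows "\<bar>dist x C - R\<bar> \<le> infdist x (sphere C R)"
proof -
  obtain y where y: "y \<in> sphere C R" and "infdist x (sphere C R) = dist x y"
    using infdist_attains_inf[of "sphere C R"] assms by auto
  moreover have "\<bar>dist x C - dist C y\<bar> \<le> dist x y"
    by (rule abs_dist_diff_le)
  ultimately show ?thesis by simp
qed

lemma exists_sphere_affine_hull_dist_eq:
  fixes b c x :: "'a::euclidean_space"
  assumes "b \<in> affine hull S" "c \<in> affine hull S" "x \<in> affine hull S" "dist b c = r"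
  obtains y where "y \<in> sphere c r \<inter> affine hull S" "dist x y = \<bar>dist x c - r\<bar>"
proof (cases "x = c")
  case True
  then show thesis
    using that[of b] assms by (auto simp: dist_commute)
next
  case False
  define y where "y = c + (r / dist x c) *\<^sub>R (x - c)"
  have "y \<in> affine hull S"
    unfolding y_def using assms(2,3) by (simp add: mem_affine_3_minus)
  moreover have "dist c y = r"
    using False assms(4) zero_le_dist[of b c] by (simp add: y_def dist_norm)
  moreover have "dist x y = \<bar>dist x c - r\<bar>"
  proof -
    have "x - y = (1 - r / dist x c) *\<^sub>R (x - c)"
      unfolding y_def by (simp add: algebra_simps)
    then have "dist x y = \<bar>1 - r / dist x c\<bar> * dist x c"
      by (simp add: dist_norm)
    also have "\<dots> = \<bar>dist x c - r\<bar>"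
      using False by (simp add: abs_mult[symmetric] field_simps)
    finally show ?thesis .
  qed
  ultimately show thesis
    using that by simp
qed

lemma infdist_circumsphere_le:
  fixes C p :: "'a::euclidean_space"
  assumes T: "a \<in> T" "b \<in> T" "a \<noteq> b" and C: "circumscribing C R T"
    and \<mu>: "0 < \<mu>" "\<mu> \<le> 1" and R: "R \<le> 3/\<mu> * circumradius T"
  shows "infdist p (circumsphere T)
    \<le> 6/\<mu> * (infdist p (frontier (ball C R)) + infdist p (affine hull T))"
proof -
  define c where "c = circumcentre T"
  define r where "r = circumradius T"
  have circ: "circumscribing c r T" and c: "c \<in> affine hull T"
    using circumcentre_circumradius[OF T C] unfolding c_def r_def by simp_all
  then have r: "0 < r" and R0: "0 < R"
    and on_c: "\<And>y. y \<in> T \<Longrightarrow> dist y c = r" and on_C: "\<And>y. y \<in> T \<Longrightarrow> dist y C = R"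
    using C by (auto simp: circumscribing_iff)
  have pyth: "dist x C ^2 = dist x c ^2 + dist C c ^2" if "x \<in> affine hull T" for x
    by (rule dist_equidistant_centres_Pythagoras[OF T(1) c that on_c on_C])
  obtain x z where x: "x \<in> affine hull T" and z: "\<forall>v\<in>span ((\<lambda>y. y - a) ` T). orthogonal z v"
    and p: "p = x + z"
    using affine_hull_orthogonal_decomp[OF T(1)] by blast
  define D where "D = infdist p (sphere C R)"
  obtain y where y: "y \<in> sphere c r \<inter> affine hull T" and xy: "dist x y = \<bar>dist x c - r\<bar>"
    using exists_sphere_affine_hull_dist_eq[OF hull_inc[OF T(1)] c x on_c[OF T(1)]] by blast
  have "dist y p ^2 = norm z ^2 + (dist x c - r)^2"
    using dist_add_orthogonal_affine_hull[OF T(1) _ x z] y xy p by (simp add: dist_commute)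
  then have "dist p y = sqrt (norm z ^2 + (dist x c - r)^2)"
    by (simp add: dist_commute real_sqrt_unique)
  then have "infdist p (circumsphere T) \<le> sqrt (norm z ^2 + (dist x c - r)^2)"
    using infdist_le[of y "circumsphere T" p] y r
    by (simp add: circumsphere_def c_def r_def)
  also have "\<dots> \<le> 6/\<mu> * (D + norm z)"
  proof (rule sqrt_sum_squares_le_of_abs_le[OF \<mu>])
    have "\<bar>dist x c - r\<bar> * r \<le> \<bar>dist x C - R\<bar> * (dist C c + R)"
      using pyth[OF x] pyth[OF hull_inc[OF T(1)]] on_c[OF T(1)] on_C[OF T(1)] r R0
        dist_triangle[of x C c] dist_commute[of c C]
      by (intro abs_diff_mult_le_of_common_leg) simp_all
    also have "\<dots> \<le> (D + norm z) * ((6/\<mu> - \<mu>/6) * r)"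
    proof (rule mult_mono)
      show "\<bar>dist x C - R\<bar> \<le> D + norm z"
        using abs_dist_diff_le_infdist_sphere[of R x C] infdist_triangle[of x "sphere C R" p] R0 p
        by (simp add: D_def dist_norm)
      show "dist C c + R \<le> (6/\<mu> - \<mu>/6) * r"
        using pyth[OF hull_inc[OF T(1)]] on_c[OF T(1)] on_C[OF T(1)] r R0 R
        by (intro leg_add_hypotenuse_le[OF \<mu>]) (simp_all add: r_def)
    qed (use R0 in \<open>simp_all add: D_def infdist_nonneg\<close>)
    finally show "\<bar>dist x c - r\<bar> \<le> (6/\<mu> - \<mu>/6) * (D + norm z)"
      using r by (simp add: mult.commute)
  qed (simp_all add: D_def infdist_nonneg)
  also have "\<dots> \<le> 6/\<mu> * (infdist p (frontier (ball C R)) + infdist p (affine hull T))"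
    using norm_le_infdist_affine_hull[OF T(1) x z] \<mu> R0 p
    by (intro mult_left_mono add_left_mono) (simp_all add: D_def)
  finally show ?thesis .
qed

section \<open>Edge lengths, thickness and flakes\<close>

lemma card_ge_2_obtains_distinct:
  assumes "2 \<le> card S"
  obtains a b where "a \<in> S" "b \<in> S" "a \<noteq> b"
proof -
  obtain T where "T \<subseteq> S" "card T = 2"
    using obtain_subset_with_card_n[OF assms] by blast
  then show thesis
    using that by (auto simp: card_2_iff)
qed

lemma finite_pairwise_dists:
  "finite S \<Longrightarrow> finite {dist x y | x y. x \<in> S \<and> y \<in> S \<and> x \<noteq> y}"
  by (rule finite_subset[of _ "(\<lambda>(x, y). dist x y) ` (S \<times> S)"]) auto

lemma dist_le_Lmax: "finite S \<Longrightarrow> x \<in> S \<Longrightarrow> y \<in> S \<Longrightarrow> x \<noteq> y \<Longrightarrow> dist x y \<le> Lmax S"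
  unfolding Lmax_def by (rule Max_ge[OF finite_pairwise_dists]) auto

lemma lmin_le_dist: "finite S \<Longrightarrow> x \<in> S \<Longrightarrow> y \<in> S \<Longrightarrow> x \<noteq> y \<Longrightarrow> lmin S \<le> dist x y"
  unfolding lmin_def by (rule Min_le[OF finite_pairwise_dists]) auto

lemma lmin_attained:
  assumes "finite S" "x \<in> S" "y \<in> S" "x \<noteq> y"
  obtains u v where "u \<in> S" "v \<in> S" "u \<noteq> v" "lmin S = dist u v"
proof -
  have "lmin S \<in> {dist x y | x y. x \<in> S \<and> y \<in> S \<and> x \<noteq> y}"
    unfolding lmin_def using assms by (intro Min_in finite_pairwise_dists) auto
  then show thesis using that by blast
qed

lemma lmin_le_Lmax: "finite S \<Longrightarrow> x \<in> S \<Longrightarrow> y \<in> S \<Longrightarrow> x \<noteq> y \<Longrightarrow> lmin S \<le> Lmax S"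
  by (metis dist_le_Lmax lmin_attained)

lemma lmin_mono:
  assumes "finite S" "T \<subseteq> S" "x \<in> T" "y \<in> T" "x \<noteq> y"
  shows "lmin S \<le> lmin T"
  using assms finite_subset[OF assms(2,1)]
  by (metis lmin_attained lmin_le_dist subsetD)

lemma Lmax_mono:
  assumes "finite S" "T \<subseteq> S" "x \<in> T" "y \<in> T" "x \<noteq> y"
  shows "Lmax T \<le> Lmax S"
  unfolding Lmax_def using assms by (intro Max_mono finite_pairwise_dists) auto

lemma Lmax_doubleton: "x \<noteq> y \<Longrightarrow> Lmax {x, y} = dist x y"
proof -
  assume "x \<noteq> y"
  then have "{dist u v | u v. u \<in> {x, y} \<and> v \<in> {x, y} \<and> u \<noteq> v} = {dist x y}"
    by (auto simp: dist_commute)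
  then show ?thesis by (simp add: Lmax_def)
qed

lemma lmin_le_two_radius:
  assumes "finite T" "a \<in> T" "b \<in> T" "a \<noteq> b" "circumscribing c r T"
  shows "lmin T \<le> 2 * r"
  using lmin_le_dist[OF assms(1-4)] dist_triangle[of a b c] assms(2,3,5)
  by (simp add: circumscribing_iff dist_commute)

lemma flake_thickness_less:
  assumes "flake \<Gamma>0 \<sigma>"
  shows "thickness \<sigma> < \<Gamma>0 ^ sdim \<sigma>"
proof -
  obtain \<tau> where \<tau>: "\<tau> \<subseteq> \<sigma>" "\<tau> \<noteq> {}" "\<not> \<Gamma>0 ^ sdim \<tau> \<le> thickness \<tau>"
    using assms unfolding flake_def good_def by blast
  moreover have "\<not> \<tau> \<subset> \<sigma>"
    using assms \<tau>(2,3) unfolding flake_def good_def by blast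
  ultimately show ?thesis
    by (metis not_le psubsetI)
qed

lemma thickness_eq_min_altitude:
  assumes "finite \<sigma>" "\<sigma> \<noteq> {}" "sdim \<sigma> \<noteq> 0"
  obtains q where "q \<in> \<sigma>" "thickness \<sigma> = altitude q \<sigma> / (real (sdim \<sigma>) * Lmax \<sigma>)"
    "\<And>x. x \<in> \<sigma> \<Longrightarrow> altitude q \<sigma> \<le> altitude x \<sigma>"
proof -
  have "Min ((\<lambda>x. altitude x \<sigma>) ` \<sigma>) \<in> (\<lambda>x. altitude x \<sigma>) ` \<sigma>"
    using assms(1,2) by (intro Min_in) auto
  then obtain q where q: "q \<in> \<sigma>" "Min ((\<lambda>x. altitude x \<sigma>) ` \<sigma>) = altitude q \<sigma>"
    by auto
  moreover have "altitude q \<sigma> \<le> altitude x \<sigma>" if "x \<in> \<sigma>" for x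
    unfolding q(2)[symmetric] using assms(1) that by (intro Min_le) auto
  ultimately show thesis
    using that assms(3) by (simp add: thickness_def)
qed

lemma good_altitude_ge:
  assumes "good \<Gamma>0 \<sigma>" "finite \<sigma>" "q \<in> \<sigma>" "sdim \<sigma> \<noteq> 0" "0 < Lmax \<sigma>"
  shows "\<Gamma>0 ^ sdim \<sigma> * (real (sdim \<sigma>) * Lmax \<sigma>) \<le> altitude q \<sigma>"
proof -
  obtain q' where "thickness \<sigma> = altitude q' \<sigma> / (real (sdim \<sigma>) * Lmax \<sigma>)"
    and "altitude q' \<sigma> \<le> altitude q \<sigma>"
    using thickness_eq_min_altitude[of \<sigma>] assms(2-4) by blast
  moreover have "\<Gamma>0 ^ sdim \<sigma> \<le> thickness \<sigma>"
    using assms(1,3) unfolding good_def by blast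
  ultimately show ?thesis
    using assms(4,5) by (simp add: le_divide_eq)
qed

lemma flake_thin_vertex:
  assumes "flake \<Gamma>0 \<sigma>" "finite \<sigma>" "\<sigma> \<noteq> {}" "sdim \<sigma> \<noteq> 0" "0 < Lmax \<sigma>"
  obtains q where "q \<in> \<sigma>" "altitude q \<sigma> < \<Gamma>0 ^ sdim \<sigma> * (real (sdim \<sigma>) * Lmax \<sigma>)"
proof -
  obtain q where "q \<in> \<sigma>" "thickness \<sigma> = altitude q \<sigma> / (real (sdim \<sigma>) * Lmax \<sigma>)"
    using thickness_eq_min_altitude[of \<sigma>] assms(2-4) by blast
  then show thesis
    using that flake_thickness_less[OF assms(1)] assms(4,5) by (simp add: divide_less_eq)
qed

lemma flake_card_ge_3:
  assumes "flake \<Gamma>0 \<sigma>" "finite \<sigma>" "\<sigma> \<noteq> {}" "\<Gamma>0 \<le> 1"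
  shows "3 \<le> card \<sigma>"
proof (rule ccontr)
  assume "\<not> 3 \<le> card \<sigma>"
  then have "card \<sigma> = 1 \<or> card \<sigma> = 2"
    using card_gt_0_iff[of \<sigma>] assms(2,3) by linarith
  then have "thickness \<sigma> = 1 \<and> sdim \<sigma> \<le> 1"
  proof
    assume "card \<sigma> = 2"
    then obtain x y where "\<sigma> = {x, y}" "x \<noteq> y"
      by (meson card_2_iff)
    then show ?thesis
      by (simp add: thickness_def sdim_def altitude_def Lmax_doubleton insert_Diff_if dist_commute)
  qed (simp add: thickness_def sdim_def)
  then show False
    using flake_thickness_less[OF assms(1)] assms(4)
    by (auto simp: le_Suc_eq)
qed

lemma flake_facet_distinct_vertices:
  assumes "flake \<Gamma>0 \<sigma>" "finite \<sigma>" "\<Gamma>0 \<le> 1" "p \<in> \<sigma>"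
  obtains a b where "a \<in> \<sigma> - {p}" "b \<in> \<sigma> - {p}" "a \<noteq> b"
proof -
  have "3 \<le> card \<sigma>"
    using assms(4) by (intro flake_card_ge_3[OF assms(1,2) _ assms(3)]) auto
  then have "2 \<le> card (\<sigma> - {p})"
    using assms(2,4) by (simp add: card_Diff_singleton)
  then show thesis
    using that by (rule card_ge_2_obtains_distinct)
qed

section \<open>Altitudes of a flake\<close>

lemma power_mult_of_nat_le:
  fixes x :: real
  assumes "0 \<le> x" "x \<le> 1/2" "1 \<le> k"
  shows "x^k * real k \<le> 2 * x"
proof -
  obtain j where k: "k = Suc j"
    using assms(3) by (cases k) auto
  have "x^j * real k \<le> (1/2)^j * 2^k"
    using assms(1,2) of_nat_less_two_power[of k]
    by (intro mult_mono power_mono) auto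
  also have "\<dots> = 2"
    unfolding k by (simp add: power_one_over[symmetric] power_mult_distrib[symmetric])
  finally show ?thesis
    using assms(1) mult_left_mono[of "x^j * real k" 2 x] unfolding k by (simp add: algebra_simps)
qed

lemma le_two_mult_of_less_power_mult:
  fixes \<Gamma> h L :: real
  assumes "0 < \<Gamma>" "1 \<le> k" "0 \<le> h" "h \<le> L" "h < \<Gamma>^k * (real k * L)"
  shows "h \<le> 2 * \<Gamma> * L"
proof (cases "\<Gamma> \<le> 1/2")
  case True
  have "\<Gamma>^k * real k * L \<le> 2 * \<Gamma> * L"
    using power_mult_of_nat_le[of \<Gamma> k] assms True by (intro mult_right_mono) auto
  then show ?thesis using assms(5) by (simp add: mult.assoc)
next
  case False
  then have "1 * L \<le> (2 * \<Gamma>) * L"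
    using assms(3,4) by (intro mult_right_mono) auto
  then show ?thesis using assms(4) by linarith
qed

lemma altitude_mult_exchange:
  fixes \<tau> :: "'a::euclidean_space set"
  assumes "p \<in> \<tau>" "q \<in> \<tau>" "a \<in> \<tau>" "p \<noteq> q" "a \<noteq> p" "a \<noteq> q"
  shows "altitude p \<tau> * altitude q (\<tau> - {p}) \<le> altitude q \<tau> * dist p a"
proof -
  define T where "T = \<tau> - {p} - {q}"
  have "a \<in> T" "\<tau> - {p} = insert q T" "\<tau> - {q} = insert p T" "\<tau> - {p} - {q} = T"
    using assms unfolding T_def by auto
  then show ?thesis
    using infdist_affine_hull_insert_exchange[of a T p q] by (simp add: altitude_def)
qed

lemma altitude_mult_Lmax_le_of_good_facet:
  fixes \<tau> :: "'a::euclidean_space set"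
  assumes "finite \<tau>" "3 \<le> card \<tau>" "p \<in> \<tau>" "q \<in> \<tau>" "p \<noteq> q" "0 < \<Gamma>0"
    and good: "good \<Gamma>0 (\<tau> - {p})"
    and thin: "altitude q \<tau> < \<Gamma>0 ^ sdim \<tau> * (real (sdim \<tau>) * Lmax \<tau>)"
  shows "altitude p \<tau> * Lmax (\<tau> - {p}) \<le> 2 * \<Gamma>0 * Lmax \<tau> ^ 2"
proof -
  define k where "k = sdim \<tau>"
  define L where "L = Lmax \<tau>"
  have "card (\<tau> - {p} - {q}) \<noteq> 0"
    using assms(1-5) by (simp add: card_Diff_singleton_if)
  then obtain a where a: "a \<in> \<tau>" "a \<noteq> p" "a \<noteq> q"
    by (metis Diff_iff card.empty ex_in_conv insertI1)
  have k: "2 \<le> k" "sdim (\<tau> - {p}) = k - 1"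
    using assms(1-3) by (auto simp: k_def sdim_def card_Diff_singleton_if)
  have L: "dist p a \<le> L"
    unfolding L_def using a(2) by (intro dist_le_Lmax[OF assms(1,3) a(1)]) auto
  then have L0: "0 < L"
    using a(2) by (metis dist_pos_lt less_le_trans)
  have "dist q a \<le> Lmax (\<tau> - {p})"
    using assms(1,4,5) a by (intro dist_le_Lmax) auto
  moreover have "0 < dist q a"
    using a(3) by simp
  ultimately have Lp: "0 < Lmax (\<tau> - {p})"
    by linarith
  have h: "0 \<le> altitude p \<tau>" "0 \<le> altitude q \<tau>"
    by (simp_all add: altitude_def infdist_nonneg)
  have "altitude p \<tau> * (\<Gamma>0 ^ (k - 1) * (real (k - 1) * Lmax (\<tau> - {p})))
      \<le> altitude p \<tau> * altitude q (\<tau> - {p})"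
    using good_altitude_ge[OF good _ _ _ Lp, of q] assms(1,4,5) k h by (intro mult_left_mono) auto
  also have "\<dots> \<le> altitude q \<tau> * L"
    using altitude_mult_exchange[OF assms(3,4) a(1) assms(5) a(2,3)] L h(2)
      mult_left_mono[of "dist p a" L "altitude q \<tau>"] by linarith
  also have "\<dots> \<le> \<Gamma>0 ^ k * (real k * L) * L"
    using thin L0 unfolding k_def L_def by (intro mult_right_mono) auto
  also have "\<dots> \<le> \<Gamma>0 ^ (k - 1) * (real (k - 1) * (2 * \<Gamma>0 * L ^ 2))"
  proof -
    have "\<Gamma>0 ^ k = \<Gamma>0 ^ (k - 1) * \<Gamma>0"
      using k(1) by (metis Suc_diff_1 less_le_trans pos2 power_Suc2)
    moreover have "real k \<le> real (k - 1) * 2"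
      using k(1) by linarith
    ultimately show ?thesis
      using assms(6) L0 by (simp add: power2_eq_square mult_right_mono algebra_simps)
  qed
  finally show ?thesis
    using assms(6) k(1) by (simp add: mult.left_commute[of "altitude p \<tau>"] L_def)
qed

lemma flake_altitude_mult_Lmax_le:
  fixes \<tau> :: "'a::euclidean_space set"
  assumes "flake \<Gamma>0 \<tau>" "finite \<tau>" "0 < \<Gamma>0" "\<Gamma>0 \<le> 1" "p \<in> \<tau>"
  shows "altitude p \<tau> * Lmax (\<tau> - {p}) \<le> 2 * \<Gamma>0 * Lmax \<tau> ^ 2"
proof -
  have card: "3 \<le> card \<tau>"
    using flake_card_ge_3[OF assms(1,2) _ assms(4)] assms(5) by blast
  obtain a b where ab: "a \<in> \<tau> - {p}" "b \<in> \<tau> - {p}" "a \<noteq> b"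
    using flake_facet_distinct_vertices[OF assms(1,2,4,5)] .
  define L where "L = Lmax \<tau>"
  have Lp: "Lmax (\<tau> - {p}) \<le> L"
    unfolding L_def using assms(2) ab by (intro Lmax_mono) auto
  have "dist a b \<le> Lmax (\<tau> - {p})"
    using assms(2) ab by (intro dist_le_Lmax) auto
  then have Lp0: "0 \<le> Lmax (\<tau> - {p})"
    by (rule order_trans[OF zero_le_dist])
  have hL: "altitude p \<tau> \<le> L"
  proof -
    have "altitude p \<tau> \<le> dist p a"
      unfolding altitude_def using ab(1) by (intro infdist_le hull_inc)
    also have "\<dots> \<le> L"
      unfolding L_def using assms(2,5) ab(1) by (intro dist_le_Lmax) auto
    finally show ?thesis .
  qed
  have sd: "sdim \<tau> \<noteq> 0" and L0: "0 < L"
    using card hL dist_le_Lmax[of \<tau> a b] ab assms(2) unfolding L_def sdim_def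
    by (auto intro: less_le_trans[OF dist_pos_lt])
  obtain q where q: "q \<in> \<tau>" and thin: "altitude q \<tau> < \<Gamma>0 ^ sdim \<tau> * (real (sdim \<tau>) * L)"
    using flake_thin_vertex[OF assms(1,2) _ sd] assms(5) L0 unfolding L_def by blast
  show ?thesis
  proof (cases "q = p")
    case True
    then have "altitude p \<tau> \<le> 2 * \<Gamma>0 * L"
      using sd thin hL
      by (intro le_two_mult_of_less_power_mult[OF assms(3)]) (auto simp: altitude_def infdist_nonneg)
    then have "altitude p \<tau> * Lmax (\<tau> - {p}) \<le> (2 * \<Gamma>0 * L) * L"
      using Lp Lp0 assms(3) L0 by (intro mult_mono) auto
    then show ?thesis
      by (simp add: L_def power2_eq_square)
  next
    case False
    have "\<tau> - {p} \<subset> \<tau>" "\<tau> - {p} \<noteq> {}"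
      using assms(5) ab(1) by auto
    then have "good \<Gamma>0 (\<tau> - {p})"
      using assms(1) unfolding flake_def by blast
    then show ?thesis
      using altitude_mult_Lmax_le_of_good_facet[OF assms(2) card assms(5) q] False assms(3) thin
      unfolding L_def by blast
  qed
qed

lemma flake_altitude_le:
  fixes \<tau> :: "'a::euclidean_space set"
  assumes "flake \<Gamma>0 \<tau>" "finite \<tau>" "0 < \<Gamma>0" "\<Gamma>0 \<le> 1" "p \<in> \<tau>"
    and "0 < l" "l \<le> lmin \<tau>" "Lmax \<tau> \<le> L"
  shows "altitude p \<tau> \<le> 2 * \<Gamma>0 * L^2 / l"
proof -
  obtain a b where ab: "a \<in> \<tau> - {p}" "b \<in> \<tau> - {p}" "a \<noteq> b"
    using flake_facet_distinct_vertices[OF assms(1,2,4,5)] .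
  have "l \<le> lmin (\<tau> - {p})"
    using assms(7) lmin_mono[OF assms(2) _ ab] by auto
  also have "\<dots> \<le> Lmax (\<tau> - {p})"
    using assms(2) ab by (intro lmin_le_Lmax) auto
  finally have lLp: "l \<le> Lmax (\<tau> - {p})" .
  also have "\<dots> \<le> Lmax \<tau>"
    using assms(2) ab by (intro Lmax_mono) auto
  finally have "0 \<le> Lmax \<tau>"
    using assms(6) by linarith
  have "altitude p \<tau> * l \<le> altitude p \<tau> * Lmax (\<tau> - {p})"
    using lLp by (intro mult_left_mono) (simp_all add: altitude_def infdist_nonneg)
  also have "\<dots> \<le> 2 * \<Gamma>0 * Lmax \<tau> ^ 2"
    by (rule flake_altitude_mult_Lmax_le[OF assms(1-5)])
  also have "\<dots> \<le> 2 * \<Gamma>0 * L^2"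
    using \<open>0 \<le> Lmax \<tau>\<close> assms(3,8) by (intro mult_left_mono power_mono) auto
  finally show ?thesis
    using assms(6) by (simp add: field_simps)
qed

theorem mainTheorem9:
  fixes \<tau> :: "'a::euclidean_space set" and p C :: 'a
    and \<epsilon>' \<mu>' \<Gamma>0 R \<delta>0 :: real
  assumes "\<epsilon>' > 0" and "0 < \<mu>'" and "\<mu>' \<le> 1" and "0 < \<Gamma>0" and "\<Gamma>0 \<le> 1"
    and "is_simplex \<tau>" and "flake \<Gamma>0 \<tau>"
    and "Lmax \<tau> \<le> 3 * \<epsilon>'" and "lmin \<tau> \<ge> \<mu>' * \<epsilon>'"
    and "p \<in> \<tau>"
    and "circumscribing C R (\<tau> - {p})" and "R < 3/2 * \<epsilon>'"
    and "\<delta>0 \<ge> 0"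
    and "infdist p (frontier (ball C R)) \<le> \<delta>0 * lmin (\<tau> - {p})"
  shows "infdist p (circumsphere (\<tau> - {p}))
           \<le> (14 / \<mu>' * \<delta>0 + 216 / \<mu>' ^ 3 * \<Gamma>0) * circumradius (\<tau> - {p})"
proof -
  define r where "r = circumradius (\<tau> - {p})"
  have fin: "finite \<tau>"
    using assms(6) by (simp add: is_simplex_def)
  obtain a b where ab: "a \<in> \<tau> - {p}" "b \<in> \<tau> - {p}" "a \<noteq> b"
    using flake_facet_distinct_vertices[OF assms(7) fin assms(5,10)] .
  have circ: "circumscribing (circumcentre (\<tau> - {p})) r (\<tau> - {p})"
    unfolding r_def by (rule circumcentre_circumradius(1)[OF ab assms(11)])
  then have r: "0 < r" and l: "lmin (\<tau> - {p}) \<le> 2 * r"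
    using lmin_le_two_radius[OF _ ab] fin by (simp_all add: circumscribing_iff)
  moreover have "\<mu>' * \<epsilon>' \<le> lmin (\<tau> - {p})"
    using assms(9) lmin_mono[OF fin _ ab] by auto
  ultimately have \<epsilon>: "\<epsilon>' \<le> 2 * r / \<mu>'"
    using assms(2) by (simp add: field_simps)
  have h: "infdist p (affine hull (\<tau> - {p})) \<le> 18 * \<Gamma>0 * \<epsilon>' / \<mu>'"
    using flake_altitude_le[OF assms(7) fin assms(4,5,10) _ assms(9,8)] assms(1,2)
    by (simp add: altitude_def field_simps power2_eq_square)
  have "infdist p (circumsphere (\<tau> - {p}))
      \<le> 6/\<mu>' * (infdist p (frontier (ball C R)) + infdist p (affine hull (\<tau> - {p})))"
    using infdist_circumsphere_le[OF ab assms(11) assms(2,3)] assms(12) \<epsilon> by (simp add: r_def)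
  also have "\<dots> \<le> 6/\<mu>' * (\<delta>0 * lmin (\<tau> - {p}) + 18 * \<Gamma>0 * \<epsilon>' / \<mu>')"
    using assms(2,14) h by (intro mult_left_mono add_mono) auto
  also have "\<dots> \<le> 6/\<mu>' * (\<delta>0 * (2 * r) + 18 * \<Gamma>0 * (2 * r / \<mu>') / \<mu>')"
    using l \<epsilon> assms(2,4,13) by (intro mult_left_mono add_mono divide_right_mono) auto
  also have "\<dots> = 12 * (\<delta>0 * r / \<mu>') + 216 / \<mu>' ^ 3 * \<Gamma>0 * r"
    using assms(2) by (simp add: field_simps power3_eq_cube)
  also have "\<dots> \<le> 14 * (\<delta>0 * r / \<mu>') + 216 / \<mu>' ^ 3 * \<Gamma>0 * r"
    using r assms(2,13) by (intro add_right_mono mult_right_mono) simp_all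
  also have "\<dots> = (14 / \<mu>' * \<delta>0 + 216 / \<mu>' ^ 3 * \<Gamma>0) * r"
    by (simp add: algebra_simps)
  finally show ?thesis unfolding r_def .
qed

end
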